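(* Let $w$ satisfy (A1), fix $\delta\in(0,1/2)$, and suppose (A2) holds: $a_\delta(x)\ge \int_0^1 \widetilde w_\delta(x,y)\,dy$ for all $x\in\Omega$. Then for every $f\in L^2(\Omega)$, $|(\widetilde{\mathcal N}_\delta)^{-1}f(x)|\le 2\,(\widetilde{\mathcal P}_\delta)^{-1}|f|(x)$ for a.e. $x\in\Omega$.
   Context: Throughout, $\Omega=(0,1)$, $\delta\in(0,1/2)$, and $\chi_A$ denotes the indicator function of a set $A$. A function $w:[0,\infty)\to[0,\infty)$ satisfies (A1) if $w$ is continuous and nonincreasing on $[0,1)$, positive on $(0,1)$, $w(r)=0$ for $r\ge 1$, and $\int_{\mathbb R} w(|z|)|z|^2\,dz=2$. Set $w_\delta(x,y)=\delta^{-3}w(|x-y|/\delta)$, $a_\delta(x)=\int_0^1 w_\delta(x,y)\,dy$, and $b_\delta(x)=\frac{2}{(x+\delta)^2}\int_{x-\delta}^{0}(x-y)w_\delta(x,y)\,dy$ for $x\in(0,\delta)$, $b_\delta(x)=\frac{2}{(1-x+\delta)^2}\int_{1}^{x+\delta}(y-x)w_\delta(x,y)\,dy$ for $x\in(1-\delta,1)$, and $b_\delta(x)=0$ otherwise. The operator $\widetilde{\mathcal N}_\delta$ on $L^2(\Omega)$ is $\widetilde{\mathcal N}_\delta u(x)=a_\delta(x)u(x)-\int_0^1 u(y)\big(w_\delta(x,y)-b_\delta(x)\chi_{[0,\delta]}(|y-x|)\big)\,dy$. Define $\widetilde w_\delta(x,y)=|w_\delta(x,y)-b_\delta(x)\chi_{(0,\delta)}(|y-x|)|$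 and $\widetilde{\mathcal P}_\delta u(x)=a_\delta(x)u(x)-\int_0^1 u(y)\widetilde w_\delta(x,y)\,dy$. Under the hypotheses both operators are invertible on $L^2(\Omega)$. *)

theory Defs
  imports "HOL-Analysis.Analysis"
begin

definition Omega :: "real set" where "Omega = {0<..<1}"

definition A1 :: "(real \<Rightarrow> real) \<Rightarrow> bool" where
  "A1 w \<longleftrightarrow>
     (\<forall>r\<ge>0. w r \<ge> 0) \<and>
     continuous_on {0..<1} w \<and>
     (\<forall>r s. 0 \<le> r \<and> r \<le> s \<and> s < 1 \<longrightarrow> w s \<le> w r) \<and>
     (\<forall>r. 0 < r \<and> r < 1 \<longrightarrow> w r > 0) \<and>
     (\<forall>r\<ge>1. w r = 0) \<and>
     integrable lebesgue (\<lambda>z. w \<bar>z\<bar> * \<bar>z\<bar>^2) \<and>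
     (\<integral>z. w \<bar>z\<bar> * \<bar>z\<bar>^2 \<partial>lebesgue) = 2"

definition wd :: "(real \<Rightarrow> real) \<Rightarrow> real \<Rightarrow> real \<Rightarrow> real \<Rightarrow> real" where
  "wd w \<delta> x y = w (\<bar>x - y\<bar> / \<delta>) / \<delta>^3"

definition ad :: "(real \<Rightarrow> real) \<Rightarrow> real \<Rightarrow> real \<Rightarrow> real" where
  "ad w \<delta> x = set_lebesgue_integral lebesgue {0<..<1} (\<lambda>y. wd w \<delta> x y)"

definition bd :: "(real \<Rightarrow> real) \<Rightarrow> real \<Rightarrow> real \<Rightarrow> real" where
  "bd w \<delta> x =
     (if 0 < x \<and> x < \<delta> then
        2 / (x + \<delta>)^2 * set_lebesgue_integral lebesgue {x - \<delta>..0} (\<lambda>y. (x - y) * wd w \<delta> x y)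
      else if 1 - \<delta> < x \<and> x < 1 then
        2 / (1 - x + \<delta>)^2 * set_lebesgue_integral lebesgue {1..x + \<delta>} (\<lambda>y. (y - x) * wd w \<delta> x y)
      else 0)"

definition wtd :: "(real \<Rightarrow> real) \<Rightarrow> real \<Rightarrow> real \<Rightarrow> real \<Rightarrow> real" where
  "wtd w \<delta> x y = \<bar>wd w \<delta> x y - bd w \<delta> x * indicator {0<..<\<delta>} \<bar>y - x\<bar>\<bar>"

definition Nt :: "(real \<Rightarrow> real) \<Rightarrow> real \<Rightarrow> (real \<Rightarrow> real) \<Rightarrow> real \<Rightarrow> real" where
  "Nt w \<delta> u x = ad w \<delta> x * u x -
     set_lebesgue_integral lebesgue {0<..<1}
       (\<lambda>y. u y * (wd w \<delta> x y - bd w \<delta> x * indicator {0..\<delta>} \<bar>y - x\<bar>))"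

definition Pt :: "(real \<Rightarrow> real) \<Rightarrow> real \<Rightarrow> (real \<Rightarrow> real) \<Rightarrow> real \<Rightarrow> real" where
  "Pt w \<delta> u x = ad w \<delta> x * u x -
     set_lebesgue_integral lebesgue {0<..<1} (\<lambda>y. u y * wtd w \<delta> x y)"

definition L2_Omega :: "(real \<Rightarrow> real) \<Rightarrow> bool" where
  "L2_Omega u \<longleftrightarrow> set_borel_measurable lebesgue Omega u \<and>
     set_integrable lebesgue Omega (\<lambda>x. (u x)^2)"

end

theory Submission
  imports Defs
begin

(*
  Put phi = max 0 (|u| - v). Off a null set the kernel of Nt has modulus wtd, so Kato's
  inequality makes phi an integrable subsolution of Pt: a phi <= int phi wtd. A maximum
  principle then gives phi = 0, i.e. |u| <= v, sharper than |u| <= 2 v.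

  For the maximum principle suppose the essential supremum M of phi is positive. Then
  psi = M - phi >= 0 is a supersolution with source M s, where s = a - int wtd >= 0 by (A2).
  Explicit bounds on b show that s is bounded below on [delta/2, 3 delta/4] and that wtd is
  bounded below on pairs in the core [delta/2, 1 - delta/2] at distance at most delta/2;
  hence psi has a positive lower bound there, which spreads along the core in steps of
  delta/4. On the strip (0, delta/2) the mass of wtd reaching the core plus s is bounded
  below, so psi is bounded below there too; the strip at 1 is the mirror image, since all
  kernels are invariant under x -> 1 - x. So psi >= c > 0 a.e., contradicting the minimality
  of M.
*)

section \<open>Reflection and integration on the unit interval\<close>

lemma lebesgue_reflect: "distr lebesgue lebesgue (\<lambda>x::real. 1 - x) = lebesgue"
  using lebesgue_real_affine[of "-1" 1] by (simp add: density_1)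

lemma reflect_measurable_lebesgue: "(\<lambda>x::real. 1 - x) \<in> lebesgue \<rightarrow>\<^sub>M lebesgue"
  using lebesgue_affine_measurable[where c="\<lambda>_::real. -1" and t=1] by simp

lemma AE_lebesgue_reflect:
  assumes "AE x in lebesgue. P x" shows "AE x in lebesgue. P (1 - x :: real)"
  by (rule AE_distrD[OF reflect_measurable_lebesgue]) (unfold lebesgue_reflect, fact)

lemma set_integral_reflect_lebesgue:
  fixes f :: "real \<Rightarrow> real"
  assumes "set_borel_measurable lebesgue A f"
  shows "(LINT x:A|lebesgue. f x) = (LINT x:{x. 1 - x \<in> A}|lebesgue. f (1 - x))"
proof -
  have "(LINT x:A|lebesgue. f x) = (\<integral>x. indicator A x * f x \<partial>distr lebesgue lebesgue (\<lambda>x. 1 - x))"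
    by (simp add: lebesgue_reflect set_lebesgue_integral_def)
  also have "\<dots> = (\<integral>x. indicator A (1 - x) * f (1 - x) \<partial>lebesgue)"
    using assms by (intro integral_distr reflect_measurable_lebesgue) (simp add: set_borel_measurable_def)
  finally show ?thesis by (simp add: set_lebesgue_integral_def indicator_def)
qed

lemma set_integrable_reflect_lebesgue:
  fixes f :: "real \<Rightarrow> real"
  assumes "set_integrable lebesgue A f"
  shows "set_integrable lebesgue {x. 1 - x \<in> A} (\<lambda>x. f (1 - x))"
proof -
  have "integrable (distr lebesgue lebesgue (\<lambda>x. 1 - x)) (\<lambda>x. indicator A x * f x)"
    using assms by (simp add: lebesgue_reflect set_integrable_def)
  then have "integrable lebesgue (\<lambda>x. indicator A (1 - x) * f (1 - x))"
    by (rule integrable_distr[OF reflect_measurable_lebesgue])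
  then show ?thesis by (simp add: set_integrable_def indicator_def)
qed

lemma reflect_unit_interval: "{x. 1 - x \<in> {0<..<1}} = {0<..<1::real}"
  by auto

lemma set_integrable_bounded:
  fixes f :: "'a \<Rightarrow> real"
  assumes "f \<in> borel_measurable M" "\<And>y. y \<in> A \<Longrightarrow> \<bar>f y\<bar> \<le> C"
    and "A \<in> sets M" "emeasure M A < \<infinity>"
  shows "set_integrable M A f"
  unfolding set_integrable_def
  by (rule integrableI_bounded_set_indicator[where B=C]) (use assms in auto)

lemma borel_measurable_lebesgueI:
  "f \<in> borel_measurable borel \<Longrightarrow> f \<in> borel_measurable lebesgue"
  by (metis measurable_completion measurable_lborel2)

lemma AE_lebesgue_except_point:
  "(\<And>y. y \<in> A \<Longrightarrow> y \<noteq> c \<Longrightarrow> P y) \<Longrightarrow> AE y in lebesgue. y \<in> A \<longrightarrow> P (y::real)"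
  by (rule AE_mp[OF AE_completion[OF AE_lborel_singleton[of c]]]) (auto intro!: AE_I2)

lemma set_integral_indicator_const:
  fixes c :: real and I :: "'a set"
  assumes "I \<subseteq> A" "I \<in> sets M" "emeasure M I < \<infinity>"
  shows "(LINT y:A|M. indicator I y * c) = measure M I * c"
    and "set_integrable M A (\<lambda>y. indicator I y * c)"
proof -
  have eq: "(\<lambda>y. indicator A y *\<^sub>R (indicator I y * c)) = (\<lambda>y. indicator I y *\<^sub>R c)"
    using assms(1) by (auto simp: indicator_def fun_eq_iff)
  show "(LINT y:A|M. indicator I y * c) = measure M I * c"
    unfolding set_lebesgue_integral_def eq
    using set_integral_const[OF assms(2), of c] assms(3)
    by (simp add: set_lebesgue_integral_def)
  show "set_integrable M A (\<lambda>y. indicator I y * c)"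
    unfolding set_integrable_def eq
    using assms(2,3) by (intro integrable_scaleR_left) (auto simp: less_top[symmetric])
qed

lemma
  fixes a b :: real
  assumes "0 \<le> a" "a \<le> b" "b \<le> 1"
  shows set_integral_indicator_Ioo: "(LINT y:{0<..<1}|lebesgue. indicator {a<..<b} y) = b - a"
    and set_integrable_indicator_Ioo: "set_integrable lebesgue {0<..<1} (indicator {a<..<b} :: real \<Rightarrow> real)"
proof -
  have "{a<..<b} \<subseteq> {0<..<1}" using assms by auto
  from set_integral_indicator_const[OF this, where c=1] show
    "(LINT y:{0<..<1}|lebesgue. indicator {a<..<b} y) = b - a"
    "set_integrable lebesgue {0<..<1} (indicator {a<..<b} :: real \<Rightarrow> real)"
    using assms by auto
qed

lemma
  fixes a b :: real
  assumes "0 \<le> a" "a \<le> b" "b < 1"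
  shows set_integral_indicator_Ioc: "(LINT y:{0<..<1}|lebesgue. indicator {a<..b} y) = b - a"
    and set_integrable_indicator_Ioc: "set_integrable lebesgue {0<..<1} (indicator {a<..b} :: real \<Rightarrow> real)"
proof -
  have "{a<..b} \<subseteq> {0<..<1}" using assms by auto
  from set_integral_indicator_const[OF this, where c=1] show
    "(LINT y:{0<..<1}|lebesgue. indicator {a<..b} y) = b - a"
    "set_integrable lebesgue {0<..<1} (indicator {a<..b} :: real \<Rightarrow> real)"
    using assms by auto
qed

lemma set_integral_linear:
  fixes p q c :: real assumes "p \<le> q"
  shows "(LINT y:{p..q}|lebesgue. (c - y)) = c*(q-p) - (q^2-p^2)/2"
proof -
  have "set_integrable lebesgue {p..q} (\<lambda>y. c - y)"
    by (intro absolutely_integrable_continuous_real continuous_intros)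
  then have "(LINT y:{p..q}|lebesgue. (c - y)) = integral {p..q} (\<lambda>y. c - y)"
    by (rule set_lebesgue_integral_eq_integral(2))
  also have "\<dots> = integral {p..q} (\<lambda>y. c) - integral {p..q} (\<lambda>y. y)"
    by (rule integral_diff) (auto intro: ident_integrable_on)
  finally show ?thesis using assms by simp
qed

lemma set_integrable_mult_bounded:
  fixes f g :: "'a \<Rightarrow> real"
  assumes f: "set_integrable M A f" and g: "g \<in> borel_measurable M" and bound: "\<And>y. \<bar>g y\<bar> \<le> C"
  shows "set_integrable M A (\<lambda>y. f y * g y)"
proof (rule set_integrable_bound[where f="\<lambda>y. C * f y"])
  show "set_integrable M A (\<lambda>y. C * f y)" using f by auto
  have "(\<lambda>y. indicator A y *\<^sub>R f y) \<in> borel_measurable M"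
    using f unfolding set_integrable_def by (rule borel_measurable_integrable)
  then have "(\<lambda>y. (indicator A y *\<^sub>R f y) * g y) \<in> borel_measurable M"
    using g by measurable
  then show "set_borel_measurable M A (\<lambda>y. f y * g y)"
    unfolding set_borel_measurable_def by (simp add: mult.assoc)
  have "\<bar>f y\<bar> * \<bar>g y\<bar> \<le> \<bar>f y\<bar> * \<bar>C\<bar>" for y
    using bound[of y] by (intro mult_left_mono) auto
  then show "AE y in M. y \<in> A \<longrightarrow> norm (f y * g y) \<le> norm (C * f y)"
    by (simp add: abs_mult mult.commute)
qed

lemma set_integrable_positive_part:
  fixes f :: "'a \<Rightarrow> real"
  assumes "set_integrable M A f"
  shows "set_integrable M A (\<lambda>y. max 0 (f y))"
proof -
  have "set_integrable M A (\<lambda>y. (f y + \<bar>f y\<bar>) / 2)"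
    using set_integral_add(1)[OF assms set_integrable_abs[OF assms]] by auto
  moreover have "(\<lambda>y. (f y + \<bar>f y\<bar>) / 2) = (\<lambda>y. max 0 (f y))"
    by (auto simp: fun_eq_iff max_def)
  ultimately show ?thesis by simp
qed

lemma essential_supremum_exists:
  fixes f :: "'a \<Rightarrow> real"
  assumes nonnull: "\<not> (AE x in M. x \<notin> A)"
    and lower: "AE x in M. x \<in> A \<longrightarrow> L \<le> f x" and upper: "AE x in M. x \<in> A \<longrightarrow> f x \<le> B"
  obtains S where "AE x in M. x \<in> A \<longrightarrow> f x \<le> S"
    and "\<And>t. (AE x in M. x \<in> A \<longrightarrow> f x \<le> t) \<Longrightarrow> S \<le> t"
proof -
  define T where "T = {t. AE x in M. x \<in> A \<longrightarrow> f x \<le> t}"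
  have "L \<le> t" if "t \<in> T" for t
  proof (rule ccontr)
    assume "\<not> L \<le> t"
    have "AE x in M. x \<in> A \<longrightarrow> f x \<le> t" using that by (simp add: T_def)
    then have "AE x in M. x \<notin> A"
      using lower by eventually_elim (use \<open>\<not> L \<le> t\<close> in auto)
    with nonnull show False by simp
  qed
  then have bdd: "bdd_below T" by (auto simp: bdd_below_def)
  have "B \<in> T" using upper by (simp add: T_def)
  have approx: "AE x in M. x \<in> A \<longrightarrow> f x \<le> Inf T + 1 / Suc n" for n :: nat
  proof -
    obtain t where t: "t \<in> T" "t < Inf T + 1 / Suc n"
      using cInf_lessD[of T "Inf T + 1 / Suc n"] \<open>B \<in> T\<close> by auto
    from t(1) have "AE x in M. x \<in> A \<longrightarrow> f x \<le> t" by (simp add: T_def)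
    then show ?thesis by eventually_elim (use t(2) in auto)
  qed
  have "AE x in M. \<forall>n::nat. x \<in> A \<longrightarrow> f x \<le> Inf T + 1 / Suc n"
    by (subst AE_all_countable) (intro allI approx)
  then have "AE x in M. x \<in> A \<longrightarrow> f x \<le> Inf T"
  proof eventually_elim
    case (elim x)
    show ?case
    proof (rule impI, rule ccontr)
      assume "x \<in> A" "\<not> f x \<le> Inf T"
      then have "0 < f x - Inf T" by simp
      then obtain n :: nat where n: "1 / real (Suc n) < f x - Inf T"
        by (rule nat_approx_posE)
      from elim \<open>x \<in> A\<close> have "f x \<le> Inf T + 1 / Suc n" by blast
      with n show False by linarith
    qed
  qed
  moreover have "Inf T \<le> t" if "AE x in M. x \<in> A \<longrightarrow> f x \<le> t" for t
    using that bdd by (intro cInf_lower) (auto simp: T_def)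
  ultimately show ?thesis by (rule that)
qed

lemma L2_Omega_set_integrable:
  assumes "L2_Omega u"
  shows "set_integrable lebesgue {0<..<1} u"
proof (rule set_integrable_bound[where f="\<lambda>y. 1 + (u y)^2"])
  have "set_integrable lebesgue {0<..<1::real} (\<lambda>_. 1 :: real)"
    by (rule set_integrable_bounded[where C=1]) auto
  moreover have "set_integrable lebesgue {0<..<1} (\<lambda>y. (u y)^2)"
    using assms unfolding L2_Omega_def Omega_def by simp
  ultimately show "set_integrable lebesgue {0<..<1} (\<lambda>y. 1 + (u y)^2)"
    by (rule set_integral_add(1))
  show "set_borel_measurable lebesgue {0<..<1} u"
    using assms unfolding L2_Omega_def Omega_def by simp
  have "\<bar>u y\<bar> \<le> 1 + (u y)^2" for y
  proof (cases "\<bar>u y\<bar> \<le> 1")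
    case False
    then have "\<bar>u y\<bar> * 1 \<le> \<bar>u y\<bar> * \<bar>u y\<bar>" by (intro mult_left_mono) auto
    then show ?thesis by (simp add: power2_eq_square)
  qed (simp add: add_increasing2)
  then show "AE y in lebesgue. y \<in> {0<..<1} \<longrightarrow> norm (u y) \<le> norm (1 + (u y)^2)" by auto
qed

section \<open>The kernels\<close>

locale A1_kernel =
  fixes w :: "real \<Rightarrow> real" and \<delta> :: real
  assumes A1: "A1 w" and delta_pos: "0 < \<delta>" and delta_less: "\<delta> < 1/2"
begin

lemma w_nonneg: "0 \<le> r \<Longrightarrow> 0 \<le> w r"
  using A1 unfolding A1_def by auto

lemma w_pos: "0 < r \<Longrightarrow> r < 1 \<Longrightarrow> 0 < w r"
  using A1 unfolding A1_def by auto

lemma w_eq_0: "1 \<le> r \<Longrightarrow> w r = 0"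
  using A1 unfolding A1_def by auto

lemma w_antimono:
  assumes "0 \<le> r" "r \<le> s" shows "w s \<le> w r"
proof (cases "s < 1")
  case True then show ?thesis using A1 assms unfolding A1_def by auto
next
  case False then show ?thesis using w_eq_0[of s] w_nonneg[of r] assms by simp
qed

lemma wd_measurable: "(\<lambda>y. wd w \<delta> x y) \<in> borel_measurable borel"
proof -
  have w: "(\<lambda>r. indicator {0..<1} r *\<^sub>R w r) \<in> borel_measurable borel"
    using A1 unfolding A1_def by (intro borel_measurable_continuous_on_indicator) auto
  have "(\<lambda>y. (\<lambda>r. indicator {0..<1} r *\<^sub>R w r) (\<bar>x - y\<bar> / \<delta>) / \<delta>^3) \<in> borel_measurable borel"
    by (intro borel_measurable_divide measurable_compose[OF _ w]) auto
  moreover have "wd w \<delta> x y = indicator {0..<1} (\<bar>x - y\<bar> / \<delta>) *\<^sub>R w (\<bar>x - y\<bar> / \<delta>) / \<delta>^3" for y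
    unfolding wd_def using w_eq_0 delta_pos by (auto simp: indicator_def)
  ultimately show ?thesis by simp
qed

lemma wd_nonneg: "0 \<le> wd w \<delta> x y"
  unfolding wd_def using w_nonneg delta_pos by auto

lemma wd_eq_0: "\<delta> \<le> \<bar>x - y\<bar> \<Longrightarrow> wd w \<delta> x y = 0"
  unfolding wd_def using w_eq_0 delta_pos by auto

lemma wd_antimono: "\<bar>x - y\<bar> \<le> \<bar>x' - y'\<bar> \<Longrightarrow> wd w \<delta> x' y' \<le> wd w \<delta> x y"
  unfolding wd_def using delta_pos by (intro divide_right_mono w_antimono) (auto intro: divide_right_mono)

lemma wd_ge: "\<bar>x - y\<bar> \<le> t * \<delta> \<Longrightarrow> w t / \<delta>^3 \<le> wd w \<delta> x y"
  unfolding wd_def using delta_pos by (intro divide_right_mono w_antimono) (auto simp: pos_divide_le_eq)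

lemma wd_reflect: "wd w \<delta> (1 - x) (1 - y) = wd w \<delta> x y"
  unfolding wd_def by (simp add: abs_minus_commute)

definition kmax where "kmax = w 0 / \<delta>^3"

lemma kmax_pos: "0 < kmax"
  unfolding kmax_def using w_pos[of "1/2"] w_antimono[of 0 "1/2"] delta_pos by simp

lemma wd_le_kmax: "wd w \<delta> x y \<le> kmax"
  unfolding kmax_def wd_def using w_antimono[of 0 "\<bar>x-y\<bar>/\<delta>"] delta_pos
  by (auto intro!: divide_right_mono)

lemma set_integrable_wd:
  "A \<in> sets lebesgue \<Longrightarrow> emeasure lebesgue A < \<infinity> \<Longrightarrow> set_integrable lebesgue A (\<lambda>y. wd w \<delta> x y)"
  by (rule set_integrable_bounded[where C=kmax])
    (use borel_measurable_lebesgueI[OF wd_measurable] wd_nonneg wd_le_kmax in auto)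

lemma set_integrable_linear_wd: "set_integrable lebesgue {p..q} (\<lambda>y. (c - y) * wd w \<delta> x y)"
proof (rule set_integrable_bounded[where C="(\<bar>c - p\<bar> + \<bar>q - p\<bar>) * kmax"])
  show "(\<lambda>y. (c - y) * wd w \<delta> x y) \<in> borel_measurable lebesgue"
    using wd_measurable[of x] by (intro borel_measurable_lebesgueI) measurable
  fix y assume "y \<in> {p..q}"
  then show "\<bar>(c - y) * wd w \<delta> x y\<bar> \<le> (\<bar>c - p\<bar> + \<bar>q - p\<bar>) * kmax"
    using wd_le_kmax[of x y] wd_nonneg[of x y] unfolding abs_mult by (intro mult_mono) auto
next
  show "emeasure lebesgue {p..q} < \<infinity>" by (cases "p \<le> q") auto
qed auto

lemma bd_nonneg: "0 \<le> bd w \<delta> x"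
proof -
  have "0 \<le> (LINT y:{x-\<delta>..0}|lebesgue. (x - y) * wd w \<delta> x y)" if "0 < x"
    using that wd_nonneg unfolding set_lebesgue_integral_def
    by (intro integral_nonneg_AE AE_I2) (auto simp: indicator_def)
  moreover have "0 \<le> (LINT y:{1..x+\<delta>}|lebesgue. (y - x) * wd w \<delta> x y)" if "x < 1"
    using that wd_nonneg unfolding set_lebesgue_integral_def
    by (intro integral_nonneg_AE AE_I2) (auto simp: indicator_def)
  ultimately show ?thesis unfolding bd_def by auto
qed

lemma bd_left:
  "0 < x \<Longrightarrow> x < \<delta> \<Longrightarrow> bd w \<delta> x = 2 / (x + \<delta>)^2 * (LINT y:{x-\<delta>..0}|lebesgue. (x - y) * wd w \<delta> x y)"
  by (simp add: bd_def)

lemma bd_reflect: "bd w \<delta> (1 - x) = bd w \<delta> x"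
proof -
  have left: "bd w \<delta> (1 - x) = bd w \<delta> x" if x: "0 < x" "x < \<delta>" for x
  proof -
    let ?f = "\<lambda>y. (y - (1 - x)) * wd w \<delta> (1 - x) y"
    have "set_borel_measurable lebesgue {1..1-x+\<delta>} ?f"
      unfolding set_borel_measurable_def using wd_measurable[of "1 - x"]
      by (intro borel_measurable_lebesgueI) measurable
    then have "(LINT y:{1..1-x+\<delta>}|lebesgue. ?f y) = (LINT y:{y. 1 - y \<in> {1..1-x+\<delta>}}|lebesgue. ?f (1 - y))"
      by (rule set_integral_reflect_lebesgue)
    also have "\<dots> = (LINT y:{x-\<delta>..0}|lebesgue. (x - y) * wd w \<delta> x y)"
      by (rule arg_cong2[where f="set_lebesgue_integral lebesgue"]) (auto simp: wd_reflect)
    finally show ?thesis using x delta_less by (simp add: bd_def)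
  qed
  consider "0 < x \<and> x < \<delta>" | "1 - \<delta> < x \<and> x < 1" | "\<not> (0 < x \<and> x < \<delta>) \<and> \<not> (1 - \<delta> < x \<and> x < 1)"
    by blast
  then show ?thesis
  proof cases
    case 1 then show ?thesis using left by blast
  next
    case 2 then show ?thesis using left[of "1 - x"] by simp
  next
    case 3 then show ?thesis by (auto simp: bd_def)
  qed
qed

lemma bd_le_boundary:
  assumes x: "0 < x" "x < \<delta>"
  shows "bd w \<delta> x \<le> w (x / \<delta>) / \<delta>^3 * ((\<delta> - x) / (\<delta> + x))"
proof -
  let ?c = "w (x / \<delta>) / \<delta>^3"
  have "(LINT y:{x-\<delta>..0}|lebesgue. (x - y) * wd w \<delta> x y) \<le> (LINT y:{x-\<delta>..0}|lebesgue. (x - y) * ?c)"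
  proof (rule set_integral_mono[OF set_integrable_linear_wd])
    show "set_integrable lebesgue {x-\<delta>..0} (\<lambda>y. (x - y) * ?c)"
      by (intro set_integrable_mult_left absolutely_integrable_continuous_real continuous_intros)
    fix y assume y: "y \<in> {x-\<delta>..0}"
    then have "wd w \<delta> x y \<le> wd w \<delta> x 0"
      using x by (intro wd_antimono) auto
    also have "\<dots> = ?c"
      using x by (simp add: wd_def)
    finally have "wd w \<delta> x y \<le> ?c" .
    then show "(x - y) * wd w \<delta> x y \<le> (x - y) * ?c"
      using y x by (intro mult_left_mono) auto
  qed
  also have "\<dots> = (LINT y:{x-\<delta>..0}|lebesgue. x - y) * ?c"
    by simp
  also have "(LINT y:{x-\<delta>..0}|lebesgue. x - y) = (\<delta>^2 - x^2) / 2"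
    using set_integral_linear[of "x - \<delta>" 0 x] x by (simp add: power2_eq_square field_simps)
  finally have "bd w \<delta> x \<le> 2 / (x + \<delta>)^2 * ((\<delta>^2 - x^2) / 2 * ?c)"
    unfolding bd_left[OF x] by (rule mult_left_mono) simp
  also have "\<dots> = ?c * ((\<delta> - x) / (\<delta> + x))"
    using x delta_pos by (simp add: divide_simps power2_eq_square) algebra
  finally show ?thesis .
qed

lemma bd_le_kmax: "bd w \<delta> x \<le> kmax"
proof -
  have left: "bd w \<delta> x \<le> kmax" if x: "0 < x" "x < \<delta>" for x
  proof -
    have "bd w \<delta> x \<le> w (x / \<delta>) / \<delta>^3 * ((\<delta> - x) / (\<delta> + x))" by (rule bd_le_boundary[OF x])
    also have "\<dots> \<le> w 0 / \<delta>^3 * 1"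
      using x delta_pos w_antimono[of 0 "x / \<delta>"] w_nonneg[of "x / \<delta>"]
      by (intro mult_mono divide_right_mono) auto
    finally show ?thesis by (simp add: kmax_def)
  qed
  consider "0 < x \<and> x < \<delta>" | "0 < 1 - x \<and> 1 - x < \<delta>" | "\<not> (0 < x \<and> x < \<delta>) \<and> \<not> (1 - \<delta> < x \<and> x < 1)"
    by linarith
  then show ?thesis
  proof cases
    case 1 then show ?thesis using left by blast
  next
    case 2 then show ?thesis using left[of "1 - x"] by (simp add: bd_reflect)
  next
    case 3 then show ?thesis using kmax_pos by (auto simp: bd_def)
  qed
qed

lemma bd_le_wd: "0 < x \<Longrightarrow> x < \<delta> \<Longrightarrow> \<bar>x - y\<bar> \<le> x \<Longrightarrow> bd w \<delta> x \<le> wd w \<delta> x y"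
proof -
  assume x: "0 < x" "x < \<delta>" and y: "\<bar>x - y\<bar> \<le> x"
  have "bd w \<delta> x \<le> w (x / \<delta>) / \<delta>^3 * ((\<delta> - x) / (\<delta> + x))" by (rule bd_le_boundary[OF x])
  also have "\<dots> \<le> w (x / \<delta>) / \<delta>^3 * 1"
    using x delta_pos w_nonneg[of "x / \<delta>"] by (intro mult_left_mono) auto
  also have "\<dots> \<le> wd w \<delta> x y" using y delta_pos by (simp add: wd_ge)
  finally show ?thesis .
qed

definition bmin where "bmin = (3/64) * w (7/8) / \<delta>^3"

lemma bmin_pos: "0 < bmin"
  unfolding bmin_def using w_pos[of "7/8"] delta_pos by simp

lemma bd_ge_bmin:
  assumes x: "0 < x" "x \<le> 3 * \<delta> / 4"
  shows "bmin \<le> bd w \<delta> x"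
proof -
  let ?I = "{x - 7 * \<delta> / 8 .. x - 3 * \<delta> / 4}"
  let ?c = "(3 * \<delta> / 4) * (w (7/8) / \<delta>^3)"
  have sub: "?I \<subseteq> {x-\<delta>..0}" using x delta_pos by auto
  have "(LINT y:{x-\<delta>..0}|lebesgue. indicator ?I y * ?c) \<le> (LINT y:{x-\<delta>..0}|lebesgue. (x - y) * wd w \<delta> x y)"
  proof (rule set_integral_mono[OF set_integral_indicator_const(2)[OF sub] set_integrable_linear_wd])
    fix y assume y: "y \<in> {x-\<delta>..0}"
    show "indicator ?I y * ?c \<le> (x - y) * wd w \<delta> x y"
    proof (cases "y \<in> ?I")
      case True
      have "w (7/8) / \<delta>^3 \<le> wd w \<delta> x y" using True delta_pos by (intro wd_ge) auto
      then have "?c \<le> (x - y) * wd w \<delta> x y"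
        using True delta_pos w_nonneg[of "7/8"] by (intro mult_mono) auto
      then show ?thesis using True by simp
    qed (use y x wd_nonneg[of x y] in auto)
  qed (use delta_pos in auto)
  moreover have "(LINT y:{x-\<delta>..0}|lebesgue. indicator ?I y * ?c) = measure lebesgue ?I * ?c"
    by (rule set_integral_indicator_const(1)[OF sub]) (use delta_pos in auto)
  moreover have "measure lebesgue ?I = \<delta> / 8" using delta_pos by simp
  ultimately have I: "\<delta> / 8 * ?c \<le> (LINT y:{x-\<delta>..0}|lebesgue. (x - y) * wd w \<delta> x y)"
    by simp
  have "(x + \<delta>)^2 \<le> (2 * \<delta>)^2" using x delta_pos by (intro power_mono) auto
  then have "2 / (2 * \<delta>)^2 \<le> 2 / (x + \<delta>)^2" using x delta_pos by (intro divide_left_mono) auto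
  then have scale: "1 / (2 * \<delta>^2) \<le> 2 / (x + \<delta>)^2" by (simp add: power2_eq_square)
  have "bmin = 1 / (2 * \<delta>^2) * (\<delta> / 8 * ?c)"
    unfolding bmin_def using delta_pos by (simp add: field_simps power2_eq_square)
  also have "\<dots> \<le> 2 / (x + \<delta>)^2 * (LINT y:{x-\<delta>..0}|lebesgue. (x - y) * wd w \<delta> x y)"
    using scale I delta_pos w_nonneg[of "7/8"] by (intro mult_mono) auto
  also have "\<dots> = bd w \<delta> x" using bd_left x delta_pos by simp
  finally show ?thesis .
qed

lemma bd_le_core:
  assumes "\<delta> / 2 \<le> x" "x \<le> 1 - \<delta> / 2"
  shows "bd w \<delta> x \<le> w (1/2) / \<delta>^3 / 3"
proof -
  have left: "bd w \<delta> x \<le> w (1/2) / \<delta>^3 / 3" if x: "\<delta> / 2 \<le> x" "x < \<delta>" for x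
  proof -
    have "bd w \<delta> x \<le> w (x / \<delta>) / \<delta>^3 * ((\<delta> - x) / (\<delta> + x))"
      using bd_le_boundary x delta_pos by auto
    also have "\<dots> \<le> w (1/2) / \<delta>^3 * (1/3)"
      using x delta_pos w_nonneg[of "x / \<delta>"] w_antimono[of "1/2" "x / \<delta>"]
      by (intro mult_mono divide_right_mono) (auto simp: field_simps)
    finally show ?thesis by simp
  qed
  consider "x < \<delta>" | "1 - \<delta> < x" | "\<delta> \<le> x \<and> x \<le> 1 - \<delta>" by linarith
  then show ?thesis
  proof cases
    case 1 then show ?thesis using left assms by simp
  next
    case 2 then show ?thesis using left[of "1 - x"] assms by (simp add: bd_reflect)
  next
    case 3 then show ?thesis using w_nonneg[of "1/2"] delta_pos by (simp add: bd_def)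
  qed
qed

lemma wtd_measurable: "(\<lambda>y. wtd w \<delta> x y) \<in> borel_measurable borel"
  unfolding wtd_def using wd_measurable[of x] by measurable

lemma wtd_nonneg: "0 \<le> wtd w \<delta> x y"
  unfolding wtd_def by simp

lemma wtd_eq_0: "\<delta> \<le> \<bar>y - x\<bar> \<Longrightarrow> wtd w \<delta> x y = 0"
  unfolding wtd_def using wd_eq_0[of x y] by (auto simp: abs_minus_commute)

lemma wtd_eq_near: "y \<noteq> x \<Longrightarrow> \<bar>y - x\<bar> < \<delta> \<Longrightarrow> wtd w \<delta> x y = \<bar>wd w \<delta> x y - bd w \<delta> x\<bar>"
  unfolding wtd_def by (simp add: indicator_def)

lemma wtd_le: "wtd w \<delta> x y \<le> 2 * kmax"
proof -
  have "0 \<le> bd w \<delta> x * indicator {0<..<\<delta>} \<bar>y - x\<bar>" "bd w \<delta> x * indicator {0<..<\<delta>} \<bar>y - x\<bar> \<le> kmax"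
    using bd_nonneg[of x] bd_le_kmax[of x] kmax_pos by (auto simp: indicator_def)
  then show ?thesis unfolding wtd_def using wd_nonneg[of x y] wd_le_kmax[of x y] by linarith
qed

lemma wtd_reflect: "wtd w \<delta> (1 - x) (1 - y) = wtd w \<delta> x y"
  unfolding wtd_def wd_reflect bd_reflect by (simp add: abs_minus_commute)

definition kcore where "kcore = 2/3 * (w (1/2) / \<delta>^3)"

lemma kcore_pos: "0 < kcore"
  unfolding kcore_def using w_pos[of "1/2"] delta_pos by simp

lemma wtd_ge_kcore:
  assumes "\<delta> / 2 \<le> x" "x \<le> 1 - \<delta> / 2" "\<bar>y - x\<bar> \<le> \<delta> / 2"
  shows "kcore \<le> wtd w \<delta> x y"
proof -
  have "w (1/2) / \<delta>^3 \<le> wd w \<delta> x y" using assms(3) by (intro wd_ge) (auto simp: abs_minus_commute)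
  moreover have "bd w \<delta> x * indicator {0<..<\<delta>} \<bar>y - x\<bar> \<le> w (1/2) / \<delta>^3 / 3"
    using bd_le_core[OF assms(1,2)] bd_nonneg[of x] w_nonneg[of "1/2"] delta_pos
    by (auto simp: indicator_def)
  ultimately have "kcore \<le> wd w \<delta> x y - bd w \<delta> x * indicator {0<..<\<delta>} \<bar>y - x\<bar>"
    unfolding kcore_def by argo
  then show ?thesis unfolding wtd_def by linarith
qed

lemma set_integrable_wtd:
  "A \<in> sets lebesgue \<Longrightarrow> emeasure lebesgue A < \<infinity> \<Longrightarrow> set_integrable lebesgue A (\<lambda>y. wtd w \<delta> x y)"
  by (rule set_integrable_bounded[where C="2 * kmax"])
    (use borel_measurable_lebesgueI[OF wtd_measurable] wtd_nonneg wtd_le in auto)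

lemma ad_le_kmax: "ad w \<delta> x \<le> kmax"
proof -
  have "ad w \<delta> x \<le> (LINT y::real:{0<..<1}|lebesgue. kmax)"
    unfolding ad_def
    by (rule set_integral_mono[OF set_integrable_wd set_integrable_bounded[where C="\<bar>kmax\<bar>"]])
      (auto simp: wd_le_kmax)
  then show ?thesis by (simp add: set_integral_const)
qed

definition amin where "amin = (\<delta> / 2) * w (1/2) / \<delta>^3"

lemma amin_pos: "0 < amin"
  unfolding amin_def using w_pos[of "1/2"] delta_pos by simp

lemma ad_ge_amin:
  assumes x: "x \<in> {0<..<1}"
  shows "amin \<le> ad w \<delta> x"
proof -
  define I where "I = (if x \<le> 1/2 then {x..x + \<delta>/2} else {x - \<delta>/2..x})"
  have sub: "I \<subseteq> {0<..<1}" using x delta_pos delta_less by (auto simp: I_def)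
  have I: "measure lebesgue I = \<delta> / 2" "I \<in> sets lebesgue" "emeasure lebesgue I < \<infinity>"
    using delta_pos by (auto simp: I_def)
  have "(LINT y:{0<..<1}|lebesgue. indicator I y * (w (1/2) / \<delta>^3)) \<le> ad w \<delta> x"
    unfolding ad_def
  proof (rule set_integral_mono[OF set_integral_indicator_const(2)[OF sub I(2,3)] set_integrable_wd])
    fix y :: real
    show "indicator I y * (w (1/2) / \<delta>^3) \<le> wd w \<delta> x y"
    proof (cases "y \<in> I")
      case True
      then have "\<bar>x - y\<bar> \<le> 1/2 * \<delta>" by (auto simp: I_def split: if_splits)
      then show ?thesis using True wd_ge by auto
    qed (auto simp: wd_nonneg)
  qed auto
  moreover have "(LINT y:{0<..<1}|lebesgue. indicator I y * (w (1/2) / \<delta>^3)) = amin"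
    unfolding set_integral_indicator_const(1)[OF sub I(2,3)] I(1) amin_def by simp
  ultimately show ?thesis by simp
qed

lemma ad_pos: "x \<in> {0<..<1} \<Longrightarrow> 0 < ad w \<delta> x"
  using ad_ge_amin amin_pos by fastforce

lemma ad_reflect: "ad w \<delta> (1 - x) = ad w \<delta> x"
proof -
  have "set_borel_measurable lebesgue {0<..<1} (\<lambda>y. wd w \<delta> (1 - x) y)"
    unfolding set_borel_measurable_def using wd_measurable[of "1 - x"]
    by (intro borel_measurable_lebesgueI) measurable
  then have "ad w \<delta> (1 - x) = (LINT y:{y. 1 - y \<in> {0<..<1}}|lebesgue. wd w \<delta> (1 - x) (1 - y))"
    unfolding ad_def by (rule set_integral_reflect_lebesgue)
  then show ?thesis
    unfolding reflect_unit_interval wd_reflect ad_def .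
qed

section \<open>Kato's inequality and the defect of (A2)\<close>

lemma set_integrable_mult_wtd:
  "set_integrable lebesgue A g \<Longrightarrow> set_integrable lebesgue A (\<lambda>y. g y * wtd w \<delta> x y)"
  by (rule set_integrable_mult_bounded[where C="2 * kmax"])
    (use borel_measurable_lebesgueI[OF wtd_measurable] wtd_nonneg wtd_le in auto)

lemma abs_integral_Nt_kernel_le:
  assumes u: "set_integrable lebesgue {0<..<1} u"
  shows "\<bar>LINT y:{0<..<1}|lebesgue. u y * (wd w \<delta> x y - bd w \<delta> x * indicator {0..\<delta>} \<bar>y - x\<bar>)\<bar>
           \<le> (LINT y:{0<..<1}|lebesgue. \<bar>u y\<bar> * wtd w \<delta> x y)"
proof -
  define k where "k = (\<lambda>y. wd w \<delta> x y - bd w \<delta> x * indicator {0..\<delta>} \<bar>y - x\<bar>)"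
  \<comment> \<open>The kernel of \<open>Nt\<close> has modulus \<open>wtd\<close> off the null set \<open>{x - \<delta>, x, x + \<delta>}\<close>.\<close>
  have abs_k: "\<bar>k y\<bar> = wtd w \<delta> x y" if "y \<noteq> x" "y \<noteq> x - \<delta>" "y \<noteq> x + \<delta>" for y
  proof -
    have "indicator {0..\<delta>} \<bar>y - x\<bar> = (indicator {0<..<\<delta>} \<bar>y - x\<bar> :: real)"
      using that by (auto simp: indicator_def abs_if split: if_splits)
    then show ?thesis unfolding k_def wtd_def by simp
  qed
  have null: "AE y in lebesgue. y \<noteq> c" for c :: real
    by (rule AE_completion[OF AE_lborel_singleton])
  have pointwise: "AE y in lebesgue. y \<in> {0<..<1} \<longrightarrow> \<bar>u y * k y\<bar> \<le> \<bar>u y\<bar> * wtd w \<delta> x y"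
    using null[of x] null[of "x - \<delta>"] null[of "x + \<delta>"] by eventually_elim (simp add: abs_k abs_mult)
  have "k \<in> borel_measurable borel"
    unfolding k_def using wd_measurable[of x] by measurable
  then have k_measurable: "k \<in> borel_measurable lebesgue"
    by (rule borel_measurable_lebesgueI)
  have "\<bar>k y\<bar> \<le> 2 * kmax" for y
    unfolding k_def using wd_nonneg[of x y] wd_le_kmax[of x y] bd_nonneg[of x] bd_le_kmax[of x]
    by (auto simp: indicator_def)
  then have uk: "set_integrable lebesgue {0<..<1} (\<lambda>y. u y * k y)"
    by (rule set_integrable_mult_bounded[OF u k_measurable])
  have uw: "set_integrable lebesgue {0<..<1} (\<lambda>y. \<bar>u y\<bar> * wtd w \<delta> x y)"
    by (rule set_integrable_mult_wtd[OF set_integrable_abs[OF u]])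
  have "(LINT y:{0<..<1}|lebesgue. u y * k y) \<le> (LINT y:{0<..<1}|lebesgue. \<bar>u y\<bar> * wtd w \<delta> x y)"
    by (rule set_integral_mono_AE[OF uk uw]) (use pointwise in \<open>eventually_elim, auto\<close>)
  moreover have "(LINT y:{0<..<1}|lebesgue. - (u y * k y)) \<le> (LINT y:{0<..<1}|lebesgue. \<bar>u y\<bar> * wtd w \<delta> x y)"
  proof (rule set_integral_mono_AE[OF _ uw])
    show "set_integrable lebesgue {0<..<1} (\<lambda>y. - (u y * k y))"
      using set_integrable_mult_right[OF uk, of "-1"] by simp
  qed (use pointwise in \<open>eventually_elim, auto\<close>)
  moreover have "(LINT y:{0<..<1}|lebesgue. - (u y * k y)) = - (LINT y:{0<..<1}|lebesgue. u y * k y)"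
    by (rule set_integral_uminus[OF uk])
  ultimately show ?thesis unfolding k_def by linarith
qed

lemma kato_inequality:
  assumes u: "set_integrable lebesgue {0<..<1} u" and v: "set_integrable lebesgue {0<..<1} v"
    and x: "x \<in> {0<..<1}" and N: "Nt w \<delta> u x = f x" and P: "Pt w \<delta> v x = \<bar>f x\<bar>"
  shows "ad w \<delta> x * max 0 (\<bar>u x\<bar> - v x)
           \<le> (LINT y:{0<..<1}|lebesgue. max 0 (\<bar>u y\<bar> - v y) * wtd w \<delta> x y)"
proof -
  let ?I = "\<lambda>g. LINT y:{0<..<1}|lebesgue. g y * wtd w \<delta> x y"
  have uv: "set_integrable lebesgue {0<..<1} (\<lambda>y. \<bar>u y\<bar> - v y)"
    using set_integral_diff(1)[OF set_integrable_abs[OF u] v] .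
  have "\<bar>ad w \<delta> x * u x - f x\<bar> \<le> ?I (\<lambda>y. \<bar>u y\<bar>)"
    using abs_integral_Nt_kernel_le[OF u, of x] N unfolding Nt_def by simp
  then have "ad w \<delta> x * \<bar>u x\<bar> \<le> \<bar>f x\<bar> + ?I (\<lambda>y. \<bar>u y\<bar>)"
    using ad_pos[OF x] by (simp add: abs_mult)
  moreover have "ad w \<delta> x * v x = \<bar>f x\<bar> + ?I v"
    using P unfolding Pt_def by simp
  moreover have "?I (\<lambda>y. \<bar>u y\<bar> - v y) = ?I (\<lambda>y. \<bar>u y\<bar>) - ?I v"
    using set_integral_diff(2)[OF set_integrable_mult_wtd[OF set_integrable_abs[OF u]] set_integrable_mult_wtd[OF v]]
    by (simp add: left_diff_distrib)
  ultimately have "ad w \<delta> x * (\<bar>u x\<bar> - v x) \<le> ?I (\<lambda>y. \<bar>u y\<bar> - v y)"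
    by (simp add: right_diff_distrib)
  also have "\<dots> \<le> ?I (\<lambda>y. max 0 (\<bar>u y\<bar> - v y))"
    by (intro set_integral_mono set_integrable_mult_wtd uv set_integrable_positive_part
        mult_right_mono wtd_nonneg) auto
  finally have "ad w \<delta> x * (\<bar>u x\<bar> - v x) \<le> ?I (\<lambda>y. max 0 (\<bar>u y\<bar> - v y))" .
  moreover have "0 \<le> ?I (\<lambda>y. max 0 (\<bar>u y\<bar> - v y))"
    unfolding set_lebesgue_integral_def using wtd_nonneg
    by (intro integral_nonneg_AE AE_I2) (simp add: indicator_def)
  ultimately show ?thesis
    using ad_pos[OF x] by (simp add: max_mult_distrib_left)
qed

definition defect where "defect x = ad w \<delta> x - (LINT y:{0<..<1}|lebesgue. wtd w \<delta> x y)"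

lemma set_integrable_wd_minus_wtd:
  "set_integrable lebesgue {0<..<1} (\<lambda>y. wd w \<delta> x y - wtd w \<delta> x y)"
  by (intro set_integral_diff(1) set_integrable_wd set_integrable_wtd) auto

lemma defect_eq: "defect x = (LINT y:{0<..<1}|lebesgue. wd w \<delta> x y - wtd w \<delta> x y)"
  unfolding defect_def ad_def
  by (subst set_integral_diff(2)) (auto intro: set_integrable_wd set_integrable_wtd)

lemma defect_ge:
  assumes x: "\<delta> / 2 \<le> x" "x \<le> 3 * \<delta> / 4"
  shows "bmin * \<delta> / 2 \<le> defect x"
proof -
  let ?B = "bd w \<delta> x"
  let ?g = "\<lambda>y. indicator {0<..2*x} y * ?B - indicator {2*x<..x+\<delta>} y * ?B"
  have bounds: "0 \<le> 2 * x" "2 * x \<le> x + \<delta>" "x + \<delta> < 1" using x delta_pos delta_less by auto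
  \<comment> \<open>Where \<open>\<bar>y - x\<bar> \<le> x\<close> the kernel dominates \<open>?B\<close>, so \<open>wtd = wd - ?B\<close> there.\<close>
  have "?g y \<le> wd w \<delta> x y - wtd w \<delta> x y" if y: "y \<in> {0<..<1}" "y \<noteq> x" for y
  proof -
    consider "y \<le> 2 * x" | "2 * x < y" "y < x + \<delta>" | "x + \<delta> \<le> y" by linarith
    then show ?thesis
    proof cases
      case 1
      then have "?B \<le> wd w \<delta> x y" "\<bar>y - x\<bar> < \<delta>"
        using y x delta_pos by (auto intro!: bd_le_wd)
      then show ?thesis using 1 y wtd_eq_near[of y x] by (simp add: indicator_def)
    next
      case 2
      then show ?thesis
        using y wtd_eq_near[of y x] wd_nonneg[of x y] bd_nonneg[of x] by (simp add: indicator_def)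
    next
      case 3
      then have "\<delta> \<le> \<bar>y - x\<bar>" "\<delta> \<le> \<bar>x - y\<bar>" "\<not> y \<le> 2 * x"
        using x delta_pos by linarith+
      then have "wtd w \<delta> x y = 0" "wd w \<delta> x y = 0" "\<not> y \<le> 2 * x"
        by (simp_all add: wtd_eq_0 wd_eq_0)
      then show ?thesis using bd_nonneg[of x] by (auto simp: indicator_def)
    qed
  qed
  then have "AE y in lebesgue. y \<in> {0<..<1} \<longrightarrow> ?g y \<le> wd w \<delta> x y - wtd w \<delta> x y"
    by (rule AE_lebesgue_except_point)
  moreover have g1: "set_integrable lebesgue {0<..<1} (\<lambda>y. indicator {0<..2*x} y * ?B)"
    and g2: "set_integrable lebesgue {0<..<1} (\<lambda>y. indicator {2*x<..x+\<delta>} y * ?B)"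
    using bounds by (auto intro!: set_integrable_mult_left set_integrable_indicator_Ioc)
  ultimately have "(LINT y:{0<..<1}|lebesgue. ?g y) \<le> defect x"
    unfolding defect_eq
    by (intro set_integral_mono_AE set_integral_diff(1) g1 g2 set_integrable_wd_minus_wtd) auto
  moreover have "(LINT y:{0<..<1}|lebesgue. ?g y) = 2 * x * ?B - (\<delta> - x) * ?B"
    using bounds by (simp add: set_integral_diff(2)[OF g1 g2] set_integral_indicator_Ioc)
  moreover have "bmin * (\<delta> / 2) \<le> ?B * (3 * x - \<delta>)"
    using bd_ge_bmin[of x] x delta_pos bmin_pos by (intro mult_mono) auto
  ultimately show ?thesis by (simp add: algebra_simps)
qed

\<comment> \<open>On \<open>(0, x + \<delta>)\<close>, away from \<open>y = x\<close>, this gives \<open>wd - wtd = bd - 2 * deficit\<close>.\<close>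
definition deficit where
  "deficit x y = indicator {0<..<x + \<delta>} y * max 0 (bd w \<delta> x - wd w \<delta> x y)"

lemma deficit_nonneg: "0 \<le> deficit x y"
  unfolding deficit_def by simp

lemma set_integrable_indicator_deficit:
  assumes "S \<in> sets borel"
  shows "set_integrable lebesgue {0<..<1} (\<lambda>y. indicator S y * deficit x y)"
proof (rule set_integrable_bounded[where C=kmax])
  show "(\<lambda>y. indicator S y * deficit x y) \<in> borel_measurable lebesgue"
    unfolding deficit_def using assms
    by (intro borel_measurable_lebesgueI borel_measurable_times borel_measurable_max
        borel_measurable_diff borel_measurable_indicator wd_measurable) auto
  show "\<bar>indicator S y * deficit x y\<bar> \<le> kmax" for y
    unfolding deficit_def using bd_le_kmax[of x] wd_nonneg[of x y] kmax_pos
    by (auto simp: indicator_def)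
qed auto

lemma deficit_le_wtd:
  assumes "0 < x" "x < \<delta>" "y \<noteq> x"
  shows "deficit x y \<le> wtd w \<delta> x y"
  using assms wtd_eq_near[of y x] wtd_nonneg[of x y] by (auto simp: deficit_def indicator_def)

lemma defect_ge_deficit:
  assumes x: "0 < x" "x < \<delta> / 2"
  shows "(x + \<delta>) * bd w \<delta> x - 2 * (LINT y:{0<..<1}|lebesgue. deficit x y) \<le> defect x"
proof -
  let ?B = "bd w \<delta> x"
  have "indicator {0<..<x+\<delta>} y * ?B - 2 * deficit x y \<le> wd w \<delta> x y - wtd w \<delta> x y"
    if y: "y \<in> {0<..<1}" "y \<noteq> x" for y
  proof (cases "y < x + \<delta>")
    case True
    then have "wtd w \<delta> x y = \<bar>wd w \<delta> x y - ?B\<bar>" using x y by (intro wtd_eq_near) auto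
    then show ?thesis using True y by (auto simp: deficit_def indicator_def abs_if max_def)
  next
    case False
    then have "\<delta> \<le> \<bar>y - x\<bar>" "\<delta> \<le> \<bar>x - y\<bar>" by auto
    then show ?thesis using False by (simp add: wtd_eq_0 wd_eq_0 deficit_def)
  qed
  then have "AE y in lebesgue. y \<in> {0<..<1} \<longrightarrow>
      indicator {0<..<x+\<delta>} y * ?B - 2 * deficit x y \<le> wd w \<delta> x y - wtd w \<delta> x y"
    by (rule AE_lebesgue_except_point)
  moreover have bounds: "0 \<le> (0::real)" "0 \<le> x + \<delta>" "x + \<delta> < 1" using x delta_pos delta_less by auto
  moreover have "set_integrable lebesgue {0<..<1} (\<lambda>y. deficit x y)"
    using set_integrable_indicator_deficit[of UNIV x] by simp
  ultimately have "(LINT y:{0<..<1}|lebesgue. indicator {0<..<x+\<delta>} y * ?B - 2 * deficit x y) \<le> defect x"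
    unfolding defect_eq
    by (intro set_integral_mono_AE set_integral_diff(1) set_integrable_wd_minus_wtd
        set_integrable_mult_left set_integrable_mult_right set_integrable_indicator_Ioo) auto
  then show ?thesis
    using bounds \<open>set_integrable lebesgue {0<..<1} (\<lambda>y. deficit x y)\<close>
    by (simp add: set_integrable_indicator_Ioo set_integral_indicator_Ioo)
qed

lemma deficit_near_le_far:
  assumes x: "0 < x" "x < \<delta> / 2"
  shows "(LINT y:{0<..<1}|lebesgue. indicator {0<..\<delta>/2} y * deficit x y)
           \<le> (LINT y:{0<..<1}|lebesgue. indicator {\<delta>/2<..<1} y * deficit x y)"
proof -
  let ?B = "bd w \<delta> x"
  define D where "D = max 0 (?B - wd w \<delta> x (\<delta> / 2))"
  have bounds: "0 \<le> (0::real)" "0 \<le> \<delta> / 2" "\<delta> / 2 \<le> x + \<delta>" "x + \<delta> < 1"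
    using x delta_pos delta_less by auto
  \<comment> \<open>The deficit vanishes within distance \<open>x\<close> of \<open>x\<close>; elsewhere it grows with the distance.\<close>
  have near: "indicator {0<..\<delta>/2} y * deficit x y \<le> indicator {0<..\<delta>/2} y * D" for y
  proof (cases "y \<in> {0<..\<delta>/2}")
    case y: True
    show ?thesis
    proof (cases "\<bar>x - y\<bar> \<le> x")
      case True
      then have "?B \<le> wd w \<delta> x y" using x by (intro bd_le_wd) auto
      then show ?thesis using y by (simp add: deficit_def D_def indicator_def)
    next
      case False
      then have "\<bar>x - y\<bar> \<le> \<bar>x - \<delta> / 2\<bar>" using x y by auto
      then have "wd w \<delta> x (\<delta> / 2) \<le> wd w \<delta> x y" by (rule wd_antimono)
      then show ?thesis using y by (auto simp: deficit_def D_def indicator_def)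
    qed
  qed simp
  have far: "indicator {\<delta>/2<..<x+\<delta>} y * D \<le> indicator {\<delta>/2<..<1} y * deficit x y" for y
  proof (cases "y \<in> {\<delta>/2<..<x+\<delta>}")
    case True
    then have "\<bar>x - \<delta> / 2\<bar> \<le> \<bar>x - y\<bar>" using x by auto
    then have "wd w \<delta> x y \<le> wd w \<delta> x (\<delta> / 2)" by (rule wd_antimono)
    then show ?thesis using True bounds by (auto simp: deficit_def D_def indicator_def)
  qed (simp add: deficit_nonneg)
  have "(LINT y:{0<..<1}|lebesgue. indicator {0<..\<delta>/2} y * deficit x y)
          \<le> (LINT y:{0<..<1}|lebesgue. indicator {0<..\<delta>/2} y * D)"
    using near bounds
    by (intro set_integral_mono set_integrable_indicator_deficit set_integrable_mult_left
        set_integrable_indicator_Ioc) auto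
  also have "\<dots> = (\<delta> / 2 - 0) * D"
    using bounds by (simp add: set_integral_indicator_Ioc)
  also have "\<dots> \<le> (x + \<delta> - \<delta> / 2) * D"
    using x by (intro mult_right_mono) (auto simp: D_def)
  also have "\<dots> = (LINT y:{0<..<1}|lebesgue. indicator {\<delta>/2<..<x+\<delta>} y * D)"
    using bounds by (simp add: set_integral_indicator_Ioo)
  also have "\<dots> \<le> (LINT y:{0<..<1}|lebesgue. indicator {\<delta>/2<..<1} y * deficit x y)"
    using far bounds
    by (intro set_integral_mono set_integrable_indicator_deficit set_integrable_mult_left
        set_integrable_indicator_Ioo) auto
  finally show ?thesis .
qed

lemma far_kernel_plus_defect_ge:
  assumes x: "0 < x" "x < \<delta> / 2" and defect: "0 \<le> defect x"
  shows "\<delta> * bmin / 4 \<le> (LINT y:{0<..<1}|lebesgue. indicator {\<delta>/2<..<1} y * wtd w \<delta> x y) + defect x"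
proof -
  define near where "near = (LINT y:{0<..<1}|lebesgue. indicator {0<..\<delta>/2} y * deficit x y)"
  define far where "far = (LINT y:{0<..<1}|lebesgue. indicator {\<delta>/2<..<1} y * deficit x y)"
  have "(LINT y:{0<..<1}|lebesgue. deficit x y)
      = (LINT y:{0<..<1}|lebesgue. indicator {0<..\<delta>/2} y * deficit x y + indicator {\<delta>/2<..<1} y * deficit x y)"
    by (intro set_lebesgue_integral_cong) (auto simp: indicator_def)
  also have "\<dots> = near + far"
    unfolding near_def far_def
    by (intro set_integral_add(2) set_integrable_indicator_deficit) auto
  finally have "(LINT y:{0<..<1}|lebesgue. deficit x y) = near + far" .
  then have total: "(x + \<delta>) * bd w \<delta> x - 2 * (near + far) \<le> defect x"
    using defect_ge_deficit[OF x] by simp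
  have "far \<le> (LINT y:{0<..<1}|lebesgue. indicator {\<delta>/2<..<1} y * wtd w \<delta> x y)"
    unfolding far_def
  proof (intro set_integral_mono_AE set_integrable_indicator_deficit set_integrable_mult_wtd)
    show "set_integrable lebesgue {0<..<1} (indicator {\<delta>/2<..<1} :: real \<Rightarrow> real)"
      using delta_pos delta_less by (intro set_integrable_indicator_Ioo) auto
    show "AE y\<in>{0<..<1} in lebesgue. indicator {\<delta>/2<..<1} y * deficit x y \<le> indicator {\<delta>/2<..<1} y * wtd w \<delta> x y"
      using x by (intro AE_lebesgue_except_point mult_left_mono deficit_le_wtd) auto
  qed auto
  moreover have "near \<le> far" unfolding near_def far_def by (rule deficit_near_le_far[OF x])
  moreover have "\<delta> * bmin \<le> (x + \<delta>) * bd w \<delta> x"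
    using bd_ge_bmin[of x] x delta_pos bmin_pos by (intro mult_mono) auto
  \<comment> \<open>Either \<open>far\<close> alone exceeds a quarter of \<open>(x + \<delta>) * bd w \<delta> x\<close>, or \<open>total\<close> does the job.\<close>
  ultimately show ?thesis using total defect by argo
qed

lemma integral_mult_wtd_reflect:
  assumes "set_integrable lebesgue {0<..<1} g"
  shows "(LINT y:{0<..<1}|lebesgue. g y * wtd w \<delta> (1 - x) y) = (LINT y:{0<..<1}|lebesgue. g (1 - y) * wtd w \<delta> x y)"
proof -
  have "set_integrable lebesgue {0<..<1} (\<lambda>y. g y * wtd w \<delta> (1 - x) y)"
    by (rule set_integrable_mult_wtd[OF assms])
  then have "set_borel_measurable lebesgue {0<..<1} (\<lambda>y. g y * wtd w \<delta> (1 - x) y)"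
    unfolding set_integrable_def set_borel_measurable_def by (rule borel_measurable_integrable)
  then show ?thesis
    by (subst set_integral_reflect_lebesgue) (simp_all only: reflect_unit_interval wtd_reflect)
qed

lemma defect_reflect: "defect (1 - x) = defect x"
proof -
  have "set_integrable lebesgue {0<..<1::real} (\<lambda>_. 1 :: real)"
    by (rule set_integrable_bounded[where C=1]) auto
  from integral_mult_wtd_reflect[OF this, of x] show ?thesis
    unfolding defect_def ad_reflect by simp
qed

end

section \<open>Positive supersolutions are bounded below\<close>

locale positive_supersolution = A1_kernel +
  fixes \<psi> :: "real \<Rightarrow> real" and M :: real
  assumes integrable: "set_integrable lebesgue {0<..<1} \<psi>"
    and nonneg: "AE x in lebesgue. x \<in> {0<..<1} \<longrightarrow> 0 \<le> \<psi> x"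
    and supersolution: "AE x in lebesgue. x \<in> {0<..<1} \<longrightarrow>
          (LINT y:{0<..<1}|lebesgue. \<psi> y * wtd w \<delta> x y) + M * defect x \<le> ad w \<delta> x * \<psi> x"
    and source_pos: "0 < M"
    and defect_nonneg: "\<And>x. x \<in> {0<..<1} \<Longrightarrow> 0 \<le> defect x"
begin

lemma integral_psi_wtd_nonneg: "0 \<le> (LINT y:{0<..<1}|lebesgue. \<psi> y * wtd w \<delta> x y)"
  unfolding set_lebesgue_integral_def
  by (rule integral_nonneg_AE) (use nonneg in \<open>eventually_elim, simp add: indicator_def wtd_nonneg\<close>)

lemma le_psi_of_supersolution:
  assumes x: "x \<in> {0<..<1}"
    and super: "(LINT y:{0<..<1}|lebesgue. \<psi> y * wtd w \<delta> x y) + M * defect x \<le> ad w \<delta> x * \<psi> x"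
    and g: "0 \<le> g" "g \<le> (LINT y:{0<..<1}|lebesgue. \<psi> y * wtd w \<delta> x y) + M * defect x"
  shows "g / kmax \<le> \<psi> x"
proof -
  have "g \<le> ad w \<delta> x * \<psi> x" using g super by linarith
  then have "g / ad w \<delta> x \<le> \<psi> x" using ad_pos[OF x] by (simp add: divide_le_eq mult.commute)
  moreover have "g / kmax \<le> g / ad w \<delta> x"
    using g ad_pos[OF x] ad_le_kmax[of x] by (intro divide_left_mono) auto
  ultimately show ?thesis by linarith
qed

lemma seed_lower_bound:
  "AE x in lebesgue. x \<in> {\<delta>/2..3*\<delta>/4} \<longrightarrow> M * (bmin * \<delta> / 2) / kmax \<le> \<psi> x"
  using supersolution
proof eventually_elim
  case (elim x)
  show ?case
  proof
    assume x: "x \<in> {\<delta>/2..3*\<delta>/4}"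
    then have x_in: "x \<in> {0<..<1}" using delta_pos delta_less by auto
    have "M * (bmin * \<delta> / 2) \<le> M * defect x"
      using defect_ge[of x] x source_pos by (intro mult_left_mono) auto
    then have "M * (bmin * \<delta> / 2) \<le> (LINT y:{0<..<1}|lebesgue. \<psi> y * wtd w \<delta> x y) + M * defect x"
      using integral_psi_wtd_nonneg[of x] by linarith
    then show "M * (bmin * \<delta> / 2) / kmax \<le> \<psi> x"
      using elim x_in source_pos bmin_pos delta_pos by (intro le_psi_of_supersolution) auto
  qed
qed

lemma integral_psi_wtd_ge:
  assumes ab: "0 \<le> a" "a \<le> b" "b < 1" and c: "0 \<le> c"
    and lower: "AE y in lebesgue. y \<in> {a<..b} \<longrightarrow> c \<le> \<psi> y"
    and kernel: "\<And>y. y \<in> {a<..b} \<Longrightarrow> kcore \<le> wtd w \<delta> x y"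
  shows "c * kcore * (b - a) \<le> (LINT y:{0<..<1}|lebesgue. \<psi> y * wtd w \<delta> x y)"
proof -
  have "AE y in lebesgue. y \<in> {0<..<1} \<longrightarrow> indicator {a<..b} y * (c * kcore) \<le> \<psi> y * wtd w \<delta> x y"
    using nonneg lower
  proof eventually_elim
    case (elim y)
    show ?case
    proof (cases "y \<in> {a<..b}")
      case True
      then show ?thesis
        using elim c kcore_pos kernel[OF True] ab by (auto intro!: mult_mono)
    qed (use elim wtd_nonneg[of x y] in simp)
  qed
  then have "(LINT y:{0<..<1}|lebesgue. indicator {a<..b} y * (c * kcore))
      \<le> (LINT y:{0<..<1}|lebesgue. \<psi> y * wtd w \<delta> x y)"
    using ab
    by (intro set_integral_mono_AE set_integrable_mult_left set_integrable_indicator_Ioc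
        set_integrable_mult_wtd integrable) auto
  then show ?thesis
    using ab by (simp add: set_integral_indicator_Ioc mult.commute mult.left_commute)
qed

lemma core_extend:
  assumes c: "0 \<le> c" and e: "3 * \<delta> / 4 \<le> e" "e \<le> 1 - \<delta> / 2"
    and lower: "AE y in lebesgue. y \<in> {\<delta>/2..e} \<longrightarrow> c \<le> \<psi> y"
  shows "AE x in lebesgue. x \<in> {\<delta>/2..min (e + \<delta>/4) (1 - \<delta>/2)} \<longrightarrow> c * kcore * (\<delta> / 4) / kmax \<le> \<psi> x"
  using supersolution
proof eventually_elim
  case (elim x)
  show ?case
  proof
    assume x: "x \<in> {\<delta>/2..min (e + \<delta>/4) (1 - \<delta>/2)}"
    then have x_in: "x \<in> {0<..<1}" using delta_pos delta_less by auto
    \<comment> \<open>A subinterval of \<open>[\<delta>/2, e]\<close> of length \<open>\<delta>/4\<close> within distance \<open>\<delta>/2\<close> of \<open>x\<close>.\<close>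
    define q where "q = min (max x (3 * \<delta> / 4)) e"
    have q: "3 * \<delta> / 4 \<le> q" "q \<le> e" "q \<le> x + \<delta> / 2" "x \<le> q + \<delta> / 4"
      using x e delta_pos by (auto simp: q_def)
    have "c * kcore * (q - (q - \<delta> / 4)) \<le> (LINT y:{0<..<1}|lebesgue. \<psi> y * wtd w \<delta> x y)"
    proof (rule integral_psi_wtd_ge)
      show "0 \<le> q - \<delta> / 4" "q - \<delta> / 4 \<le> q" "q < 1"
        using q e delta_pos by auto
      show "AE y in lebesgue. y \<in> {q - \<delta>/4<..q} \<longrightarrow> c \<le> \<psi> y"
        using lower by eventually_elim (use q in auto)
      show "kcore \<le> wtd w \<delta> x y" if "y \<in> {q - \<delta>/4<..q}" for y
      proof (rule wtd_ge_kcore)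
        show "\<bar>y - x\<bar> \<le> \<delta> / 2" unfolding abs_le_iff using that q by auto
      qed (use x in auto)
    qed (rule c)
    moreover have "0 \<le> M * defect x" using defect_nonneg[OF x_in] source_pos by simp
    ultimately have "c * kcore * (\<delta> / 4) \<le> (LINT y:{0<..<1}|lebesgue. \<psi> y * wtd w \<delta> x y) + M * defect x"
      by simp
    then show "c * kcore * (\<delta> / 4) / kmax \<le> \<psi> x"
      using elim x_in c kcore_pos delta_pos by (intro le_psi_of_supersolution) auto
  qed
qed

lemma core_lower_bound:
  obtains c where "0 < c" "AE x in lebesgue. x \<in> {\<delta>/2..1 - \<delta>/2} \<longrightarrow> c \<le> \<psi> x"
proof -
  define c0 where "c0 = M * (bmin * \<delta> / 2) / kmax"
  define \<rho> where "\<rho> = kcore * (\<delta> / 4) / kmax"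
  define e where "e n = min (3 * \<delta> / 4 + real n * \<delta> / 4) (1 - \<delta> / 2)" for n :: nat
  have pos: "0 < c0" "0 < \<rho>"
    unfolding c0_def \<rho>_def using source_pos bmin_pos kcore_pos kmax_pos delta_pos by auto
  have bound: "AE x in lebesgue. x \<in> {\<delta>/2..e n} \<longrightarrow> c0 * \<rho> ^ n \<le> \<psi> x" for n
  proof (induction n)
    case 0
    have e0: "e 0 = 3 * \<delta> / 4" using delta_less by (simp add: e_def)
    show ?case using seed_lower_bound unfolding e0 c0_def by simp
  next
    case (Suc n)
    have "e (Suc n) = min (e n + \<delta> / 4) (1 - \<delta> / 2)"
      unfolding e_def using delta_pos by (simp add: min_def field_simps)
    moreover have "3 * \<delta> / 4 \<le> e n" "e n \<le> 1 - \<delta> / 2"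
      using delta_pos delta_less by (auto simp: e_def)
    ultimately show ?case
      using core_extend[OF _ _ _ Suc.IH] pos by (simp add: \<rho>_def ac_simps)
  qed
  obtain N :: nat where "4 / \<delta> \<le> real N" using real_arch_simple by blast
  then have "e N = 1 - \<delta> / 2" using delta_pos by (simp add: e_def field_simps)
  then show ?thesis using that[of "c0 * \<rho> ^ N"] bound[of N] pos by simp
qed

lemma left_strip_lower_bound:
  assumes m: "0 < m" "m \<le> M" and core: "AE y in lebesgue. y \<in> {\<delta>/2..1 - \<delta>/2} \<longrightarrow> m \<le> \<psi> y"
  shows "AE x in lebesgue. x \<in> {0<..<\<delta>/2} \<longrightarrow> m * (\<delta> * bmin / 4) / kmax \<le> \<psi> x"
  using supersolution
proof eventually_elim
  case (elim x)
  show ?case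
  proof
    assume x: "x \<in> {0<..<\<delta>/2}"
    then have x_in: "x \<in> {0<..<1}" using delta_less by auto
    let ?R = "LINT y:{0<..<1}|lebesgue. indicator {\<delta>/2<..<1} y * wtd w \<delta> x y"
    \<comment> \<open>Points within reach \<open>\<delta>\<close> of \<open>x\<close> beyond \<open>\<delta>/2\<close> lie in the core.\<close>
    have "AE y in lebesgue. y \<in> {0<..<1} \<longrightarrow> m * (indicator {\<delta>/2<..<1} y * wtd w \<delta> x y) \<le> \<psi> y * wtd w \<delta> x y"
      using core nonneg
    proof eventually_elim
      case (elim y)
      show ?case
      proof (cases "y \<in> {\<delta>/2<..<1} \<and> \<bar>y - x\<bar> < \<delta>")
        case True
        then have "y \<in> {\<delta>/2..1 - \<delta>/2}" using x delta_less by auto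
        then show ?thesis using True elim wtd_nonneg[of x y] by (auto intro: mult_right_mono)
      next
        case False
        then show ?thesis using elim wtd_nonneg[of x y] wtd_eq_0[of y x] by (auto simp: indicator_def)
      qed
    qed
    then have "m * ?R \<le> (LINT y:{0<..<1}|lebesgue. \<psi> y * wtd w \<delta> x y)"
      using delta_pos delta_less
      by (subst set_integral_mult_right[symmetric], intro set_integral_mono_AE set_integrable_mult_right
          set_integrable_mult_wtd integrable set_integrable_indicator_Ioo) auto
    moreover have "m * defect x \<le> M * defect x"
      using m defect_nonneg[OF x_in] by (intro mult_right_mono) auto
    moreover have "m * (\<delta> * bmin / 4) \<le> m * (?R + defect x)"
      using far_kernel_plus_defect_ge[of x] x defect_nonneg[OF x_in] m by (intro mult_left_mono) auto
    ultimately have "m * (\<delta> * bmin / 4) \<le> (LINT y:{0<..<1}|lebesgue. \<psi> y * wtd w \<delta> x y) + M * defect x"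
      by (simp add: distrib_left)
    then show "m * (\<delta> * bmin / 4) / kmax \<le> \<psi> x"
      using elim x_in m delta_pos bmin_pos by (intro le_psi_of_supersolution) auto
  qed
qed

lemma reflect: "positive_supersolution w \<delta> (\<lambda>x. \<psi> (1 - x)) M"
proof unfold_locales
  show "set_integrable lebesgue {0<..<1} (\<lambda>x. \<psi> (1 - x))"
    using set_integrable_reflect_lebesgue[OF integrable] by (simp only: reflect_unit_interval)
  show "AE x in lebesgue. x \<in> {0<..<1} \<longrightarrow> 0 \<le> \<psi> (1 - x)"
    using AE_lebesgue_reflect[OF nonneg] by eventually_elim auto
  show "AE x in lebesgue. x \<in> {0<..<1} \<longrightarrow>
      (LINT y:{0<..<1}|lebesgue. \<psi> (1 - y) * wtd w \<delta> x y) + M * defect x \<le> ad w \<delta> x * \<psi> (1 - x)"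
    using AE_lebesgue_reflect[OF supersolution]
    by eventually_elim (simp add: integral_mult_wtd_reflect[OF integrable] defect_reflect ad_reflect)
qed (use A1 delta_pos delta_less source_pos defect_nonneg in auto)

lemma right_strip_lower_bound:
  assumes m: "0 < m" "m \<le> M" and core: "AE y in lebesgue. y \<in> {\<delta>/2..1 - \<delta>/2} \<longrightarrow> m \<le> \<psi> y"
  shows "AE x in lebesgue. x \<in> {1 - \<delta>/2<..<1} \<longrightarrow> m * (\<delta> * bmin / 4) / kmax \<le> \<psi> x"
proof -
  interpret reflected: positive_supersolution w \<delta> "\<lambda>x. \<psi> (1 - x)" M by (rule reflect)
  have "AE y in lebesgue. y \<in> {\<delta>/2..1 - \<delta>/2} \<longrightarrow> m \<le> \<psi> (1 - y)"
    using AE_lebesgue_reflect[OF core] by eventually_elim auto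
  from AE_lebesgue_reflect[OF reflected.left_strip_lower_bound[OF m this]]
  show ?thesis by eventually_elim auto
qed

theorem lower_bound:
  obtains c where "0 < c" "AE x in lebesgue. x \<in> {0<..<1} \<longrightarrow> c \<le> \<psi> x"
proof -
  obtain c where c: "0 < c" "AE x in lebesgue. x \<in> {\<delta>/2..1 - \<delta>/2} \<longrightarrow> c \<le> \<psi> x"
    by (rule core_lower_bound)
  define m where "m = min c M"
  have m: "0 < m" "m \<le> M" using c source_pos by (auto simp: m_def)
  have core: "AE x in lebesgue. x \<in> {\<delta>/2..1 - \<delta>/2} \<longrightarrow> m \<le> \<psi> x"
    using c(2) by eventually_elim (auto simp: m_def)
  define c' where "c' = min m (m * (\<delta> * bmin / 4) / kmax)"
  have "0 < c'" unfolding c'_def using m delta_pos bmin_pos kmax_pos by simp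
  moreover have "AE x in lebesgue. x \<in> {0<..<1} \<longrightarrow> c' \<le> \<psi> x"
    using core left_strip_lower_bound[OF m core] right_strip_lower_bound[OF m core]
    by eventually_elim (force simp: c'_def)
  ultimately show ?thesis by (rule that)
qed

end

section \<open>The maximum principle\<close>

context A1_kernel
begin

theorem maximum_principle:
  fixes \<phi> :: "real \<Rightarrow> real"
  assumes integrable: "set_integrable lebesgue {0<..<1} \<phi>"
    and nonneg: "\<And>y. 0 \<le> \<phi> y"
    and subsolution: "AE x in lebesgue. x \<in> {0<..<1} \<longrightarrow>
          ad w \<delta> x * \<phi> x \<le> (LINT y:{0<..<1}|lebesgue. \<phi> y * wtd w \<delta> x y)"
    and defect_nonneg: "\<And>x. x \<in> {0<..<1} \<Longrightarrow> 0 \<le> defect x"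
  shows "AE x in lebesgue. x \<in> {0<..<1} \<longrightarrow> \<phi> x \<le> 0"
proof -
  have "\<not> (AE x in lebesgue. x \<notin> {0<..<1::real})"
  proof
    assume "AE x in lebesgue. x \<notin> {0<..<1::real}"
    then have "emeasure lebesgue {0<..<1::real} = 0"
      by (subst (asm) AE_iff_measurable[where N="{0<..<1}"]) auto
    then show False by simp
  qed
  moreover have "AE x in lebesgue. x \<in> {0<..<1} \<longrightarrow> 0 \<le> \<phi> x" using nonneg by simp
  moreover have "AE x in lebesgue. x \<in> {0<..<1} \<longrightarrow> \<phi> x \<le> 2 * kmax * (LINT y:{0<..<1}|lebesgue. \<phi> y) / amin"
    using subsolution
  proof eventually_elim
    case (elim x)
    show ?case
    proof
      assume x: "x \<in> {0<..<1}"
      have "(LINT y:{0<..<1}|lebesgue. \<phi> y * wtd w \<delta> x y) \<le> (LINT y:{0<..<1}|lebesgue. \<phi> y * (2 * kmax))"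
        using nonneg wtd_le
        by (intro set_integral_mono set_integrable_mult_wtd integrable set_integrable_mult_left mult_left_mono) auto
      moreover have "amin * \<phi> x \<le> ad w \<delta> x * \<phi> x"
        using ad_ge_amin[OF x] nonneg[of x] by (intro mult_right_mono) auto
      ultimately have "amin * \<phi> x \<le> 2 * kmax * (LINT y:{0<..<1}|lebesgue. \<phi> y)"
        using elim x by (simp add: mult.commute)
      then show "\<phi> x \<le> 2 * kmax * (LINT y:{0<..<1}|lebesgue. \<phi> y) / amin"
        using amin_pos by (simp add: pos_le_divide_eq mult.commute)
    qed
  qed
  ultimately obtain M where M_upper: "AE x in lebesgue. x \<in> {0<..<1} \<longrightarrow> \<phi> x \<le> M"
    and M_least: "\<And>t. (AE x in lebesgue. x \<in> {0<..<1} \<longrightarrow> \<phi> x \<le> t) \<Longrightarrow> M \<le> t"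
    by (rule essential_supremum_exists) blast
  show ?thesis
  proof (cases "M \<le> 0")
    case True
    show ?thesis using M_upper by eventually_elim (use True in auto)
  next
    case False
    \<comment> \<open>Then \<open>M - \<phi>\<close> is a positive supersolution, so \<open>\<phi>\<close> stays uniformly below its essential supremum.\<close>
    interpret positive_supersolution w \<delta> "\<lambda>x. M - \<phi> x" M
    proof unfold_locales
      show "set_integrable lebesgue {0<..<1} (\<lambda>x. M - \<phi> x)"
        by (intro set_integral_diff(1) integrable set_integrable_bounded[where C="\<bar>M\<bar>"]) auto
      show "AE x in lebesgue. x \<in> {0<..<1} \<longrightarrow> 0 \<le> M - \<phi> x"
        using M_upper by eventually_elim auto
      have eq: "(LINT y:{0<..<1}|lebesgue. (M - \<phi> y) * wtd w \<delta> x y)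
          = M * (LINT y:{0<..<1}|lebesgue. wtd w \<delta> x y) - (LINT y:{0<..<1}|lebesgue. \<phi> y * wtd w \<delta> x y)" for x
      proof -
        have "set_integrable lebesgue {0<..<1} (\<lambda>y. M * wtd w \<delta> x y)"
          by (intro set_integrable_mult_right set_integrable_wtd) auto
        from set_integral_diff(2)[OF this set_integrable_mult_wtd[OF integrable, of x]]
        show ?thesis by (simp add: left_diff_distrib)
      qed
      show "AE x in lebesgue. x \<in> {0<..<1} \<longrightarrow>
          (LINT y:{0<..<1}|lebesgue. (M - \<phi> y) * wtd w \<delta> x y) + M * defect x \<le> ad w \<delta> x * (M - \<phi> x)"
        using subsolution
      proof eventually_elim
        case (elim x)
        then show ?case unfolding eq defect_def by (auto simp: algebra_simps)
      qed
    qed (use A1 delta_pos delta_less False defect_nonneg in auto)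
    obtain c where "0 < c" and "AE x in lebesgue. x \<in> {0<..<1} \<longrightarrow> c \<le> M - \<phi> x"
      by (rule lower_bound)
    from this(2) have "AE x in lebesgue. x \<in> {0<..<1} \<longrightarrow> \<phi> x \<le> M - c"
      by eventually_elim auto
    then have "M \<le> M - c" by (rule M_least)
    with \<open>0 < c\<close> show ?thesis by simp
  qed
qed

corollary Nt_solution_le_Pt_solution:
  assumes u: "set_integrable lebesgue {0<..<1} u" and v: "set_integrable lebesgue {0<..<1} v"
    and defect_nonneg: "\<And>x. x \<in> {0<..<1} \<Longrightarrow> 0 \<le> defect x"
    and N: "AE x in lebesgue. x \<in> {0<..<1} \<longrightarrow> Nt w \<delta> u x = f x"
    and P: "AE x in lebesgue. x \<in> {0<..<1} \<longrightarrow> Pt w \<delta> v x = \<bar>f x\<bar>"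
  shows "AE x in lebesgue. x \<in> {0<..<1} \<longrightarrow> \<bar>u x\<bar> \<le> v x"
proof -
  have "AE x in lebesgue. x \<in> {0<..<1} \<longrightarrow> max 0 (\<bar>u x\<bar> - v x) \<le> 0"
  proof (rule maximum_principle)
    show "set_integrable lebesgue {0<..<1} (\<lambda>y. max 0 (\<bar>u y\<bar> - v y))"
      by (intro set_integrable_positive_part set_integral_diff(1) set_integrable_abs u v)
    show "AE x in lebesgue. x \<in> {0<..<1} \<longrightarrow>
        ad w \<delta> x * max 0 (\<bar>u x\<bar> - v x) \<le> (LINT y:{0<..<1}|lebesgue. max 0 (\<bar>u y\<bar> - v y) * wtd w \<delta> x y)"
      using N P by eventually_elim (auto intro: kato_inequality[OF u v])
  qed (use defect_nonneg in auto)
  then show ?thesis by eventually_elim auto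
qed

end

theorem mainTheorem4:
  fixes w :: "real \<Rightarrow> real" and \<delta> :: real and f u v :: "real \<Rightarrow> real"
  assumes "A1 w"
    and "0 < \<delta>" and "\<delta> < 1/2"
    and A2: "\<forall>x\<in>Omega. ad w \<delta> x \<ge> set_lebesgue_integral lebesgue Omega (\<lambda>y. wtd w \<delta> x y)"
    and "L2_Omega f"
    and "L2_Omega u" and "AE x in lebesgue. x \<in> Omega \<longrightarrow> Nt w \<delta> u x = f x"
    and "L2_Omega v" and "AE x in lebesgue. x \<in> Omega \<longrightarrow> Pt w \<delta> v x = \<bar>f x\<bar>"
  shows "AE x in lebesgue. x \<in> Omega \<longrightarrow> \<bar>u x\<bar> \<le> 2 * v x"
proof -
  interpret A1_kernel w \<delta> by unfold_locales (use assms in auto)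
  have "AE x in lebesgue. x \<in> {0<..<1} \<longrightarrow> \<bar>u x\<bar> \<le> v x"
  proof (rule Nt_solution_le_Pt_solution[where f=f])
    show "set_integrable lebesgue {0<..<1} u" "set_integrable lebesgue {0<..<1} v"
      using assms(6,8) by (auto intro: L2_Omega_set_integrable)
    show "0 \<le> defect x" if "x \<in> {0<..<1}" for x
      using A2 that unfolding Omega_def defect_def by auto
  qed (use assms(7,9) in \<open>simp_all add: Omega_def\<close>)
  then show ?thesis unfolding Omega_def by eventually_elim auto
qed

end
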